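(* Let $M, K, P, N$ be positive integers with $1 < M \le K \le P$. Then there exists a matrix $\mathbf{A} \in \mathbb{R}^{M \times N}$ such that every matrix $\mathbf{F} \in \mathbb{R}^{P \times N}$ with the property that, for every set $\chi \subseteq \{1,\ldots,P\}$ with $|\chi| = K$, the rows of $\mathbf{F}$ indexed by $\chi$ span all the rows of $\mathbf{A}$, satisfies the following: the number $\lambda$ of columns of $\mathbf{F}$ having more than $K-M$ zero entries satisfies $$\lambda < M\binom{P}{K-M+1}.$$ *)

theory Defs
  imports Complex_Main
begin

text \<open>Matrices are represented as functions nat => nat => real, with entries
 (i,j) for i < rows, j < cols (0-based indices). Rows are vectors in R^N.\<close>

definition row_in_span ::
  "nat \<Rightarrow> (nat \<Rightarrow> nat \<Rightarrow> real) \<Rightarrow> nat set \<Rightarrow> (nat \<Rightarrow> nat \<Rightarrow> real) \<Rightarrow> nat \<Rightarrow> bool" where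
  "row_in_span N F chi A a \<longleftrightarrow>
     (\<exists>c :: nat \<Rightarrow> real. \<forall>j<N. A a j = (\<Sum>i\<in>chi. c i * F i j))"

definition zeros_in_col :: "nat \<Rightarrow> (nat \<Rightarrow> nat \<Rightarrow> real) \<Rightarrow> nat \<Rightarrow> nat" where
  "zeros_in_col P F j = card {i. i < P \<and> F i j = 0}"

end

theory Submission
  imports Defs "HOL-Computational_Algebra.Polynomial" "HOL-Library.Function_Algebras"
begin

text \<open>Take for \<open>A\<close> the Vandermonde matrix \<open>A a j = j ^ a\<close>, any \<open>M\<close> columns of which are
linearly independent. If \<open>M\<close> columns of \<open>F\<close> vanished on a common set \<open>Z\<close> of \<open>K - M + 1\<close> rows,
pad \<open>Z\<close> by \<open>M - 1\<close> further rows to a \<open>K\<close>-set: on those columns the rows of \<open>A\<close> would lie in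
the span of only \<open>M - 1\<close> rows of \<open>F\<close>, which is impossible. So each of the
\<open>P choose (K - M + 1)\<close> row sets \<open>Z\<close> accounts for at most \<open>M - 1\<close> columns, and every column
with more than \<open>K - M\<close> zeros vanishes on some such \<open>Z\<close>.\<close>

lemma power_sum_coeffs_eq_zero:
  fixes u :: "nat \<Rightarrow> 'a::idom" and X :: "'a set"
  assumes "finite X" "M \<le> card X"
    and roots: "\<And>x. x \<in> X \<Longrightarrow> (\<Sum>a<M. u a * x ^ a) = 0"
    and "a < M"
  shows "u a = 0"
proof -
  define p where "p = (\<Sum>a<M. monom (u a) a)"
  have poly_p: "poly p x = (\<Sum>a<M. u a * x ^ a)" for x
    by (simp add: p_def poly_sum poly_monom)
  have "p = 0"
  proof (rule ccontr)
    assume "p \<noteq> 0"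
    have "degree p \<le> M - 1"
      unfolding p_def by (rule degree_sum_le) (auto intro: order.trans[OF degree_monom_le])
    moreover have "X \<subseteq> {x. poly p x = 0}"
      using roots poly_p by auto
    then have "card X \<le> card {x. poly p x = 0}"
      using \<open>p \<noteq> 0\<close> poly_roots_finite by (blast intro: card_mono)
    ultimately show False
      using card_poly_roots_bound[OF \<open>p \<noteq> 0\<close>] \<open>M \<le> card X\<close> \<open>a < M\<close> by linarith
  qed
  moreover have "coeff p a = u a"
    unfolding p_def using \<open>a < M\<close> by (simp add: coeff_sum coeff_monom)
  ultimately show ?thesis by simp
qed

interpretation fun_vec: vector_space "\<lambda>(c::'a::field) (f::'b \<Rightarrow> 'a) x. c * f x"
  by unfold_locales (auto simp: fun_eq_iff algebra_simps)

lemma sum_fun_apply: "(\<Sum>i\<in>S. f i) x = (\<Sum>i\<in>S. f i x :: 'a::comm_monoid_add)"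
  by (induction S rule: infinite_finite_induct) auto

lemma card_le_if_independent_in_span:
  fixes v :: "nat \<Rightarrow> 'b \<Rightarrow> 'a::field" and w :: "'i \<Rightarrow> 'b \<Rightarrow> 'a"
  assumes indep: "\<And>u a. (\<And>x. x \<in> D \<Longrightarrow> (\<Sum>a<M. u a * v a x) = 0) \<Longrightarrow> a < M \<Longrightarrow> u a = 0"
    and span: "\<And>a x. a < M \<Longrightarrow> x \<in> D \<Longrightarrow> v a x = (\<Sum>i\<in>S. c a i * w i x)"
    and "finite S"
  shows "M \<le> card S"
proof -
  define v' where "v' a = (\<lambda>x. if x \<in> D then v a x else 0)" for a
  define w' where "w' i = (\<lambda>x. if x \<in> D then w i x else 0)" for i
  have indep': "u a = 0" if "(\<Sum>a<M. (\<lambda>x. u a * v' a x)) = 0" "a < M" for u a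
  proof (rule indep[OF _ \<open>a < M\<close>])
    fix x assume "x \<in> D"
    with fun_cong[OF that(1), of x] show "(\<Sum>a<M. u a * v a x) = 0"
      by (simp add: sum_fun_apply v'_def)
  qed
  have "inj_on v' {..<M}"
  proof (rule inj_onI, rule ccontr)
    fix a b assume ab: "a \<in> {..<M}" "b \<in> {..<M}" "v' a = v' b" "a \<noteq> b"
    define u where "u x = (if x = a then 1 else if x = b then -1 else 0 :: 'a)" for x
    have "(\<Sum>x<M. (\<lambda>y. u x * v' x y)) = (\<Sum>x\<in>{a,b}. (\<lambda>y. u x * v' x y))"
      by (rule sum.mono_neutral_right) (use ab in \<open>auto simp: u_def\<close>)
    also have "\<dots> = 0"
      using ab by (simp add: u_def fun_eq_iff)
    finally have "u a = 0"
      using indep' ab by blast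
    then show False by (simp add: u_def)
  qed
  moreover have "fun_vec.independent (v' ` {..<M})"
  proof (rule fun_vec.independent_if_scalars_zero)
    fix f x assume sum: "(\<Sum>x\<in>v' ` {..<M}. (\<lambda>y. f x * x y)) = 0" and "x \<in> v' ` {..<M}"
    have "(\<Sum>a<M. (\<lambda>y. (f \<circ> v') a * v' a y)) = 0"
      using sum by (simp add: sum.reindex[OF \<open>inj_on v' {..<M}\<close>])
    with \<open>x \<in> v' ` {..<M}\<close> indep' show "f x = 0" by auto
  qed simp
  moreover have "v' ` {..<M} \<subseteq> fun_vec.span (w' ` S)"
  proof (rule image_subsetI)
    fix a assume "a \<in> {..<M}"
    then have "v' a = (\<Sum>i\<in>S. (\<lambda>x. c a i * w' i x))"
      using span by (auto simp: fun_eq_iff sum_fun_apply v'_def w'_def)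
    also have "\<dots> \<in> fun_vec.span (w' ` S)"
      by (intro fun_vec.span_sum fun_vec.span_scale fun_vec.span_base) auto
    finally show "v' a \<in> fun_vec.span (w' ` S)" .
  qed
  ultimately have "M \<le> card (w' ` S)"
    using fun_vec.independent_span_bound[of "w' ` S" "v' ` {..<M}"] \<open>finite S\<close>
    by (simp add: card_image)
  also have "\<dots> \<le> card S"
    using \<open>finite S\<close> by (rule card_image_le)
  finally show ?thesis .
qed

definition vandermonde :: "nat \<Rightarrow> nat \<Rightarrow> real" where
  "vandermonde a j = real j ^ a"

lemma card_vanishing_columns_less:
  fixes F :: "nat \<Rightarrow> nat \<Rightarrow> real"
  assumes spans: "\<And>chi. chi \<subseteq> {..<P} \<Longrightarrow> card chi = K \<Longrightarrow> \<forall>a<M. row_in_span N F chi vandermonde a"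
    and "0 < M" "M \<le> K" "K \<le> P"
    and Z: "Z \<subseteq> {..<P}" "card Z = K - M + 1"
  shows "card {j. j < N \<and> (\<forall>i\<in>Z. F i j = 0)} < M"
proof (rule ccontr)
  assume "\<not> ?thesis"
  then obtain J where J: "J \<subseteq> {j. j < N \<and> (\<forall>i\<in>Z. F i j = 0)}" "card J = M" "finite J"
    by (meson not_less obtain_subset_with_card_n)
  have "finite Z"
    using Z(1) finite_subset by blast
  have "M - 1 \<le> card ({..<P} - Z)"
    using Z \<open>finite Z\<close> \<open>M \<le> K\<close> \<open>K \<le> P\<close> by (simp add: card_Diff_subset)
  then obtain S where S: "S \<subseteq> {..<P} - Z" "card S = M - 1" "finite S"
    by (rule obtain_subset_with_card_n)
  have disjoint: "Z \<inter> S = {}"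
    using S by auto
  have "card (Z \<union> S) = K"
    using card_Un_disjoint[OF \<open>finite Z\<close> \<open>finite S\<close> disjoint] Z S \<open>0 < M\<close> \<open>M \<le> K\<close> by simp
  then have "\<forall>a<M. row_in_span N F (Z \<union> S) vandermonde a"
    using spans Z S by blast
  then obtain c where c: "\<And>a j. a < M \<Longrightarrow> j < N \<Longrightarrow> vandermonde a j = (\<Sum>i\<in>Z \<union> S. c a i * F i j)"
    unfolding row_in_span_def by metis
  have "M \<le> card S"
  proof (rule card_le_if_independent_in_span[where D = J and v = vandermonde and w = F])
    fix u a assume "\<And>j. j \<in> J \<Longrightarrow> (\<Sum>a<M. u a * vandermonde a j) = 0" "a < M"
    then show "u a = 0"
      using power_sum_coeffs_eq_zero[of "real ` J" M u a] J
      by (auto simp: vandermonde_def card_image)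
  next
    fix a j assume "a < M" "j \<in> J"
    then have "vandermonde a j = (\<Sum>i\<in>Z. c a i * F i j) + (\<Sum>i\<in>S. c a i * F i j)"
      using c J \<open>finite Z\<close> S(3) disjoint by (auto simp: sum.union_disjoint)
    also have "(\<Sum>i\<in>Z. c a i * F i j) = 0"
      using \<open>j \<in> J\<close> J(1) by auto
    finally show "vandermonde a j = (\<Sum>i\<in>S. c a i * F i j)"
      by simp
  qed fact
  with S(2) \<open>0 < M\<close> show False
    by simp
qed

lemma card_columns_with_many_zeros_le:
  fixes F :: "nat \<Rightarrow> nat \<Rightarrow> real"
  assumes "\<And>Z. Z \<subseteq> {..<P} \<Longrightarrow> card Z = L \<Longrightarrow> card {j. j < N \<and> (\<forall>i\<in>Z. F i j = 0)} \<le> B"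
  shows "card {j. j < N \<and> L \<le> zeros_in_col P F j} \<le> (P choose L) * B"
proof -
  define Zs where "Zs = {Z. Z \<subseteq> {..<P} \<and> card Z = L}"
  have "finite Zs"
    unfolding Zs_def by auto
  have "{j. j < N \<and> L \<le> zeros_in_col P F j} \<subseteq> (\<Union>Z\<in>Zs. {j. j < N \<and> (\<forall>i\<in>Z. F i j = 0)})"
  proof clarify
    fix j assume "j < N" "L \<le> zeros_in_col P F j"
    then obtain Z where "Z \<subseteq> {i. i < P \<and> F i j = 0}" "card Z = L"
      unfolding zeros_in_col_def by (meson obtain_subset_with_card_n)
    with \<open>j < N\<close> show "j \<in> (\<Union>Z\<in>Zs. {j. j < N \<and> (\<forall>i\<in>Z. F i j = 0)})"
      unfolding Zs_def by blast
  qed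
  then have "card {j. j < N \<and> L \<le> zeros_in_col P F j}
      \<le> card (\<Union>Z\<in>Zs. {j. j < N \<and> (\<forall>i\<in>Z. F i j = 0)})"
    by (rule card_mono[rotated]) (auto simp: \<open>finite Zs\<close>)
  also have "\<dots> \<le> (\<Sum>Z\<in>Zs. card {j. j < N \<and> (\<forall>i\<in>Z. F i j = 0)})"
    using \<open>finite Zs\<close> by (rule card_UN_le)
  also have "\<dots> \<le> card Zs * B"
    using sum_bounded_above[of Zs _ B] assms unfolding Zs_def by auto
  also have "card Zs = P choose L"
    unfolding Zs_def using n_subsets[of "{..<P}" L] by simp
  finally show ?thesis .
qed

theorem lemma3:
  fixes M K P N :: nat
  assumes "0 < M" "0 < K" "0 < P" "0 < N"
    and "1 < M" "M \<le> K" "K \<le> P"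
  shows "\<exists>A :: nat \<Rightarrow> nat \<Rightarrow> real.
           \<forall>F :: nat \<Rightarrow> nat \<Rightarrow> real.
             (\<forall>chi. chi \<subseteq> {..<P} \<and> card chi = K \<longrightarrow>
                (\<forall>a<M. row_in_span N F chi A a))
             \<longrightarrow> card {j. j < N \<and> zeros_in_col P F j > K - M} < M * (P choose (K - M + 1))"
proof (intro exI[of _ vandermonde] allI impI)
  fix F :: "nat \<Rightarrow> nat \<Rightarrow> real"
  assume "\<forall>chi. chi \<subseteq> {..<P} \<and> card chi = K \<longrightarrow> (\<forall>a<M. row_in_span N F chi vandermonde a)"
  then have "card {j. j < N \<and> (\<forall>i\<in>Z. F i j = 0)} \<le> M - 1"
    if "Z \<subseteq> {..<P}" "card Z = K - M + 1" for Z
    using card_vanishing_columns_less[of P K M N F Z] assms that by simp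
  then have "card {j. j < N \<and> K - M + 1 \<le> zeros_in_col P F j} \<le> (P choose (K - M + 1)) * (M - 1)"
    by (rule card_columns_with_many_zeros_le)
  also have "\<dots> < M * (P choose (K - M + 1))"
    using assms by (simp add: zero_less_binomial)
  finally show "card {j. j < N \<and> zeros_in_col P F j > K - M} < M * (P choose (K - M + 1))"
    by (simp add: Suc_le_eq)
qed

end
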